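(* Let $n\ge1$, $\alpha\in\mathbb{C}$ with $|\alpha|<1$, and $\phi_\alpha(z)=\left(\dfrac{z-\alpha}{1-\overline{\alpha}z}\right)^n$. Then: (1) the matrix of $S^*(\phi_\alpha)$ with respect to the orthonormal basis $e_k(z)=\dfrac{(1-|\alpha|^2)^{1/2}}{1-\overline\alpha z}\left(\dfrac{z-\alpha}{1-\overline\alpha z}\right)^{k-1}$, $k=1,\dots,n$, of $H(\phi_\alpha)$ equals $(S_n^*+\overline\alpha I_n)(I_n+\alpha S_n^* )^{-1}$; (2) $W(S^*(\phi_\alpha))=e^{-i\arg(\alpha)}W(S^*(\phi_{|\alpha|}))$; (3) the numerical radius of $S^*(\phi_\alpha)$ is independent of the argument of $\alpha$, and for $0\le\alpha<1$ the numerical range of $S^*(\phi_\alpha)$ is symmetric with respect to the real axis.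
   Context: $\mathbb{H}^2$ is the Hardy space of the unit disc, $S$ the unilateral shift $Sf=zf$. For an inner function $\phi$, $H(\phi)=\mathbb{H}^2\ominus\phi\mathbb{H}^2$, $S(\phi)f=P(zf)$ with $P$ the orthogonal projection onto $H(\phi)$, and $S^*(\phi)=S(\phi)^*=S^*|_{H(\phi)}$. $S_n$ is the $n\times n$ matrix with ones on the subdiagonal and zeros elsewhere, $S_n^*$ its transpose. $W(\cdot)$ denotes the numerical range. *)

theory Defs
  imports "HOL-Analysis.Analysis" "Jordan_Normal_Form.Gauss_Jordan_Elimination"
begin

text \<open>Functions on the unit disc are represented as functions complex to complex;
  only their values on the open unit disc matter.\<close>

definition taylor_coeff :: "(complex \<Rightarrow> complex) \<Rightarrow> nat \<Rightarrow> complex" where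
  "taylor_coeff f k = (deriv ^^ k) f 0 / of_nat (fact k)"

definition hardy2 :: "(complex \<Rightarrow> complex) set" where
  "hardy2 = {f. f holomorphic_on ball 0 1 \<and> summable (\<lambda>k. (cmod (taylor_coeff f k))\<^sup>2)}"

definition h2_inner :: "(complex \<Rightarrow> complex) \<Rightarrow> (complex \<Rightarrow> complex) \<Rightarrow> complex" where
  "h2_inner f g = (\<Sum>k. taylor_coeff f k * cnj (taylor_coeff g k))"

definition h2_norm :: "(complex \<Rightarrow> complex) \<Rightarrow> real" where
  "h2_norm f = sqrt (\<Sum>k. (cmod (taylor_coeff f k))\<^sup>2)"

definition model_space :: "(complex \<Rightarrow> complex) \<Rightarrow> (complex \<Rightarrow> complex) set" where
  "model_space \<phi> = {f \<in> hardy2. \<forall>g\<in>hardy2. h2_inner f (\<lambda>z. \<phi> z * g z) = 0}"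

definition bshift :: "(complex \<Rightarrow> complex) \<Rightarrow> (complex \<Rightarrow> complex)" where
  "bshift f z = (if z = 0 then deriv f 0 else (f z - f 0) / z)"

definition num_range_Sstar :: "(complex \<Rightarrow> complex) \<Rightarrow> complex set" where
  "num_range_Sstar \<phi> = {h2_inner (bshift f) f | f. f \<in> model_space \<phi> \<and> h2_norm f = 1}"

definition num_radius_Sstar :: "(complex \<Rightarrow> complex) \<Rightarrow> real" where
  "num_radius_Sstar \<phi> = Sup (cmod ` num_range_Sstar \<phi>)"

definition blaschke_pow :: "complex \<Rightarrow> nat \<Rightarrow> complex \<Rightarrow> complex" where
  "blaschke_pow \<alpha> n z = ((z - \<alpha>) / (1 - cnj \<alpha> * z)) ^ n"

definition ebasis :: "complex \<Rightarrow> nat \<Rightarrow> complex \<Rightarrow> complex" where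
  "ebasis \<alpha> k z = of_real (sqrt (1 - (cmod \<alpha>)\<^sup>2)) / (1 - cnj \<alpha> * z)
                   * ((z - \<alpha>) / (1 - cnj \<alpha> * z)) ^ (k - 1)"

definition shift_mat :: "nat \<Rightarrow> complex mat" where
  "shift_mat n = mat n n (\<lambda>(i, j). if i = j + 1 then 1 else 0)"

end

theory Submission
  imports Defs "HOL-Complex_Analysis.Complex_Analysis" "Jordan_Normal_Form.Determinant"
begin

text \<open>Everything rests on two facts about the Blaschke factor b(z) = (z - a) / (1 - cnj a z):
  multiplication by b is an isometry of H^2, and every f in H^2 with f(a) = 0 is b times an
  element of H^2. Since e_1 is a multiple of the reproducing kernel at a and
  e_(k+1) = b^k e_1, the first fact gives orthonormality of the e_k and their membership in
  H(b^n); peeling off the e_1-component and dividing by b gives, by induction on n, that they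
  span H(b^n). The identity e_j(z) = e_j(0) + z (cnj a e_j(z) + (1 - |a|^2) \<Sum>i<j (-a)^(j-1-i) e_i(z))
  computes S^* e_j and hence its matrix. Finally f(z) \<mapsto> f(w z) with |w| = 1 and
  f(z) \<mapsto> cnj (f (cnj z)) act unitarily on H^2, carry H(phi_a) to H(phi_(|a|)) resp.
  H(phi_r) to itself for real r, and multiply \<langle>S^* f, f\<rangle> by w resp. conjugate it.\<close>

definition square_summable :: "(nat \<Rightarrow> complex) \<Rightarrow> bool" where
  "square_summable a \<longleftrightarrow> summable (\<lambda>k. (cmod (a k))\<^sup>2)"

definition rshift :: "(nat \<Rightarrow> complex) \<Rightarrow> nat \<Rightarrow> complex" where
  "rshift a n = (if n = 0 then 0 else a (n - 1))"

lemma square_summable_add: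
  assumes A: "square_summable a" and B: "square_summable b"
  shows "square_summable (\<lambda>n. a n + b n)"
proof -
  have "summable (\<lambda>k. 2 * (cmod (a k))\<^sup>2 + 2 * (cmod (b k))\<^sup>2)"
    using A B by (intro summable_add summable_mult) (auto simp: square_summable_def)
  moreover have "norm ((cmod (a k + b k))\<^sup>2) \<le> 2 * (cmod (a k))\<^sup>2 + 2 * (cmod (b k))\<^sup>2" for k
  proof -
    have "(cmod (a k + b k))\<^sup>2 \<le> (cmod (a k) + cmod (b k))\<^sup>2"
      by (intro power_mono norm_triangle_ineq) auto
    also have "\<dots> \<le> 2 * (cmod (a k))\<^sup>2 + 2 * (cmod (b k))\<^sup>2"
      using zero_le_power2[of "cmod (a k) - cmod (b k)"] unfolding power2_diff power2_sum by linarith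
    finally show ?thesis by simp
  qed
  ultimately show ?thesis
    unfolding square_summable_def by (rule summable_comparison_test'[where N=0])
qed

lemma square_summable_cmult: "square_summable a \<Longrightarrow> square_summable (\<lambda>n. c * a n)"
  unfolding square_summable_def by (simp add: norm_mult power_mult_distrib summable_mult)

lemma square_summable_diff:
  "square_summable a \<Longrightarrow> square_summable b \<Longrightarrow> square_summable (\<lambda>n. a n - b n)"
  using square_summable_add[of a "\<lambda>n. - 1 * b n"] square_summable_cmult[of b "- 1"] by simp

lemma square_summable_rshift_iff: "square_summable (rshift a) \<longleftrightarrow> square_summable a"
  unfolding square_summable_def
  by (subst summable_Suc_iff[symmetric]) (simp add: rshift_def)

lemma square_summable_Suc: "square_summable a \<Longrightarrow> square_summable (\<lambda>n. a (Suc n))"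
  unfolding square_summable_def using summable_Suc_iff[of "\<lambda>k. (cmod (a k))\<^sup>2"] by simp

lemma summable_mult_cnj:
  assumes A: "square_summable a" and B: "square_summable b"
  shows "summable (\<lambda>n. a n * cnj (b n))"
proof -
  have "summable (\<lambda>k. (cmod (a k))\<^sup>2 + (cmod (b k))\<^sup>2)"
    using A B by (intro summable_add) (auto simp: square_summable_def)
  moreover have "norm (a k * cnj (b k)) \<le> (cmod (a k))\<^sup>2 + (cmod (b k))\<^sup>2" for k
    using zero_le_power2[of "cmod (a k) - cmod (b k)"]
      mult_nonneg_nonneg[OF norm_ge_zero norm_ge_zero, of "a k" "b k"]
    unfolding power2_diff norm_mult complex_mod_cnj by linarith
  ultimately show ?thesis
    by (rule summable_comparison_test'[where N=0])
qed

lemma square_summable_if_L2_set_bounded: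
  assumes "\<And>N. L2_set (\<lambda>k. cmod (u k)) {..N} \<le> C"
  shows "square_summable u"
proof -
  have "(\<Sum>k\<le>N. (cmod (u k))\<^sup>2) \<le> C\<^sup>2" for N
  proof -
    have "(\<Sum>k\<le>N. (cmod (u k))\<^sup>2) = (L2_set (\<lambda>k. cmod (u k)) {..N})\<^sup>2"
      unfolding L2_set_def by (simp add: sum_nonneg)
    also have "\<dots> \<le> C\<^sup>2"
      by (intro power_mono assms L2_set_nonneg)
    finally show ?thesis .
  qed
  thus ?thesis unfolding square_summable_def by (intro bounded_imp_summable) auto
qed

lemma square_summable_if_le_contraction:
  assumes f: "square_summable f" and r: "0 \<le> r" "r < 1"
    and u: "\<And>k. cmod (u k) \<le> cmod (f k) + r * cmod (v k)"
    and v: "\<And>N. L2_set (\<lambda>k. cmod (v k)) {..N} \<le> L2_set (\<lambda>k. cmod (u k)) {..N} + B"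
  shows "square_summable u"
proof (rule square_summable_if_L2_set_bounded)
  fix N
  define F where "F = sqrt (\<Sum>k. (cmod (f k))\<^sup>2)"
  let ?U = "L2_set (\<lambda>k. cmod (u k)) {..N}"
  have "?U \<le> L2_set (\<lambda>k. cmod (f k) + r * cmod (v k)) {..N}"
    by (rule L2_set_mono) (use u in auto)
  also have "\<dots> \<le> L2_set (\<lambda>k. cmod (f k)) {..N} + L2_set (\<lambda>k. r * cmod (v k)) {..N}"
    by (rule L2_set_triangle_ineq)
  also have "L2_set (\<lambda>k. r * cmod (v k)) {..N} = r * L2_set (\<lambda>k. cmod (v k)) {..N}"
    by (rule L2_set_right_distrib[symmetric]) (use r in simp)
  also have "\<dots> \<le> r * (?U + B)"
    by (intro mult_left_mono v r)
  also have "L2_set (\<lambda>k. cmod (f k)) {..N} \<le> F"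
    unfolding L2_set_def F_def using f
    by (intro real_sqrt_le_mono sum_le_suminf) (auto simp: square_summable_def)
  finally have "(1 - r) * ?U \<le> F + r * B" by (simp add: algebra_simps)
  thus "?U \<le> (F + r * B) / (1 - r)" using r by (simp add: field_simps)
qed

lemma L2_set_rshift_le: "L2_set (\<lambda>k. cmod (rshift u k)) {..N} \<le> L2_set (\<lambda>k. cmod (u k)) {..N}"
proof (cases N)
  case (Suc M)
  have "(\<Sum>k\<le>N. (cmod (rshift u k))\<^sup>2) = (\<Sum>k\<le>M. (cmod (u k))\<^sup>2)"
    unfolding Suc sum.atMost_Suc_shift by (simp add: rshift_def)
  also have "\<dots> \<le> (\<Sum>k\<le>N. (cmod (u k))\<^sup>2)"
    unfolding Suc by simp
  finally show ?thesis unfolding L2_set_def by simp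
qed (simp add: rshift_def L2_set_def)

lemma square_summable_forward_recurrence:
  assumes "square_summable f" "cmod a < 1" "\<And>k. u k = f k + a * rshift u k"
  shows "square_summable u"
proof (rule square_summable_if_le_contraction[where B = 0])
  show "cmod (u k) \<le> cmod (f k) + cmod a * cmod (rshift u k)" for k
    using norm_triangle_ineq[of "f k" "a * rshift u k"] assms(3)[of k] by (simp add: norm_mult)
qed (use assms(1,2) L2_set_rshift_le in auto)

lemma taylor_coeff_eqI:
  assumes "\<And>z. z \<in> ball 0 1 \<Longrightarrow> (\<lambda>n. a n * z ^ n) sums g z"
  shows "taylor_coeff g k = a k"
proof -
  have "eventually (\<lambda>z. z \<in> ball 0 1) (nhds (0::complex))"
    by (intro eventually_nhds_in_open) auto
  hence "eventually (\<lambda>u. (\<lambda>n. fps_nth (Abs_fps a) n * u ^ n) sums g u) (nhds 0)"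
    by eventually_elim (use assms in auto)
  hence "g has_fps_expansion Abs_fps a" by (rule has_fps_expansionI)
  from fps_nth_fps_expansion[OF this, of k] show ?thesis by (simp add: taylor_coeff_def)
qed

lemma holomorphic_on_ball_if_sums:
  assumes "\<And>z. z \<in> ball 0 1 \<Longrightarrow> (\<lambda>n. a n * z ^ n) sums g z"
  shows "g holomorphic_on ball 0 1"
  using power_series_holomorphic[of 0 1 a g] assms by simp

lemma sums_taylor_coeff:
  assumes "f holomorphic_on ball 0 1" "z \<in> ball 0 1"
  shows "(\<lambda>n. taylor_coeff f n * z ^ n) sums f z"
  using holomorphic_power_series[OF assms] by (simp add: taylor_coeff_def)

lemma taylor_coeff_cong:
  assumes "\<And>z. z \<in> ball 0 1 \<Longrightarrow> f z = g z"
  shows "taylor_coeff f = taylor_coeff g"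
proof
  fix k
  have "eventually (\<lambda>z. z \<in> ball 0 1) (nhds (0::complex))"
    by (intro eventually_nhds_in_open) auto
  hence "eventually (\<lambda>z. f z = g z) (nhds 0)"
    by eventually_elim (use assms in auto)
  thus "taylor_coeff f k = taylor_coeff g k"
    unfolding taylor_coeff_def using higher_deriv_cong_ev by metis
qed

lemma taylor_coeff_const: "taylor_coeff (\<lambda>z. c) k = (if k = 0 then c else 0)"
proof (rule taylor_coeff_eqI)
  fix z :: complex
  have "(\<lambda>n. if n = 0 then c else 0) sums c" using sums_single[of 0 "\<lambda>_. c"] by simp
  thus "(\<lambda>n. (if n = 0 then c else 0) * z ^ n) sums c"
    by (rule sums_cong[THEN iffD1, rotated]) auto
qed

lemma taylor_coeff_add:
  assumes "f holomorphic_on ball 0 1" "g holomorphic_on ball 0 1"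
  shows "taylor_coeff (\<lambda>z. f z + g z) k = taylor_coeff f k + taylor_coeff g k"
  by (rule taylor_coeff_eqI)
    (use sums_add[OF sums_taylor_coeff[OF assms(1)] sums_taylor_coeff[OF assms(2)]]
      in \<open>simp add: distrib_right\<close>)

lemma taylor_coeff_diff:
  assumes "f holomorphic_on ball 0 1" "g holomorphic_on ball 0 1"
  shows "taylor_coeff (\<lambda>z. f z - g z) k = taylor_coeff f k - taylor_coeff g k"
  by (rule taylor_coeff_eqI)
    (use sums_diff[OF sums_taylor_coeff[OF assms(1)] sums_taylor_coeff[OF assms(2)]]
      in \<open>simp add: left_diff_distrib\<close>)

lemma taylor_coeff_cmult:
  assumes "f holomorphic_on ball 0 1"
  shows "taylor_coeff (\<lambda>z. c * f z) k = c * taylor_coeff f k"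
  by (rule taylor_coeff_eqI) (use sums_mult[OF sums_taylor_coeff[OF assms], of _ c] in \<open>simp add: mult_ac\<close>)

lemma taylor_coeff_sum:
  assumes "\<And>i. i \<in> A \<Longrightarrow> f i holomorphic_on ball 0 1"
  shows "taylor_coeff (\<lambda>z. \<Sum>i\<in>A. c i * f i z) k = (\<Sum>i\<in>A. c i * taylor_coeff (f i) k)"
proof (rule taylor_coeff_eqI)
  fix z :: complex assume z: "z \<in> ball 0 1"
  have "(\<lambda>n. \<Sum>i\<in>A. c i * (taylor_coeff (f i) n * z ^ n)) sums (\<Sum>i\<in>A. c i * f i z)"
    by (intro sums_sum sums_mult sums_taylor_coeff assms z)
  thus "(\<lambda>n. (\<Sum>i\<in>A. c i * taylor_coeff (f i) n) * z ^ n) sums (\<Sum>i\<in>A. c i * f i z)"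
    by (simp add: sum_distrib_left mult_ac)
qed

lemma taylor_coeff_mult_z:
  assumes "g holomorphic_on ball 0 1"
  shows "taylor_coeff (\<lambda>z. z * g z) k = rshift (taylor_coeff g) k"
proof (rule taylor_coeff_eqI)
  fix z :: complex assume "z \<in> ball 0 1"
  hence "(\<lambda>n. z * (taylor_coeff g n * z ^ n)) sums (z * g z)"
    by (intro sums_mult sums_taylor_coeff assms)
  hence "(\<lambda>n. rshift (taylor_coeff g) (Suc n) * z ^ Suc n) sums (z * g z)"
    by (simp add: rshift_def mult_ac)
  thus "(\<lambda>n. rshift (taylor_coeff g) n * z ^ n) sums (z * g z)"
    by (subst (asm) sums_Suc_iff) (simp add: rshift_def)
qed

lemma taylor_coeff_Suc_eqI:
  assumes "g holomorphic_on ball 0 1" "\<And>z. z \<in> ball 0 1 \<Longrightarrow> f z = c + z * g z"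
  shows "taylor_coeff f (Suc m) = taylor_coeff g m"
proof -
  have "taylor_coeff f (Suc m) = taylor_coeff (\<lambda>z. c + z * g z) (Suc m)"
    using taylor_coeff_cong[of f "\<lambda>z. c + z * g z"] assms(2) by simp
  also have "\<dots> = taylor_coeff (\<lambda>z. c) (Suc m) + taylor_coeff (\<lambda>z. z * g z) (Suc m)"
    by (rule taylor_coeff_add) (auto intro!: holomorphic_intros assms(1))
  also have "\<dots> = taylor_coeff g m"
    by (simp add: taylor_coeff_mult_z[OF assms(1)] taylor_coeff_const rshift_def)
  finally show ?thesis .
qed

section \<open>The Hardy space\<close>

lemma hardy2_iff:
  "f \<in> hardy2 \<longleftrightarrow> f holomorphic_on ball 0 1 \<and> square_summable (taylor_coeff f)"
  by (simp add: hardy2_def square_summable_def)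

lemma hardy2_holomorphic: "f \<in> hardy2 \<Longrightarrow> f holomorphic_on ball 0 1"
  by (simp add: hardy2_iff)

lemma hardy2_square_summable: "f \<in> hardy2 \<Longrightarrow> square_summable (taylor_coeff f)"
  by (simp add: hardy2_iff)

lemma summable_h2_inner:
  "f \<in> hardy2 \<Longrightarrow> g \<in> hardy2 \<Longrightarrow> summable (\<lambda>k. taylor_coeff f k * cnj (taylor_coeff g k))"
  by (intro summable_mult_cnj hardy2_square_summable)

lemma hardy2_add:
  assumes "f \<in> hardy2" "g \<in> hardy2"
  shows "(\<lambda>z. f z + g z) \<in> hardy2"
proof -
  have "taylor_coeff (\<lambda>z. f z + g z) = (\<lambda>k. taylor_coeff f k + taylor_coeff g k)"
    using assms by (auto simp: taylor_coeff_add hardy2_holomorphic)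
  thus ?thesis using assms by (simp add: hardy2_iff square_summable_add holomorphic_intros)
qed

lemma hardy2_diff:
  assumes "f \<in> hardy2" "g \<in> hardy2"
  shows "(\<lambda>z. f z - g z) \<in> hardy2"
proof -
  have "taylor_coeff (\<lambda>z. f z - g z) = (\<lambda>k. taylor_coeff f k - taylor_coeff g k)"
    using assms by (auto simp: taylor_coeff_diff hardy2_holomorphic)
  thus ?thesis using assms by (simp add: hardy2_iff square_summable_diff holomorphic_intros)
qed

lemma hardy2_cmult:
  assumes "f \<in> hardy2"
  shows "(\<lambda>z. c * f z) \<in> hardy2"
proof -
  have "taylor_coeff (\<lambda>z. c * f z) = (\<lambda>k. c * taylor_coeff f k)"
    using assms by (auto simp: taylor_coeff_cmult hardy2_holomorphic)
  thus ?thesis using assms by (simp add: hardy2_iff square_summable_cmult holomorphic_intros)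
qed

lemma hardy2_sum:
  "finite A \<Longrightarrow> (\<And>i. i \<in> A \<Longrightarrow> f i \<in> hardy2) \<Longrightarrow> (\<lambda>z. \<Sum>i\<in>A. c i * f i z) \<in> hardy2"
proof (induction A rule: finite_induct)
  case empty
  show ?case by (simp add: hardy2_iff taylor_coeff_const square_summable_def)
next
  case (insert x F)
  have "(\<lambda>z. c x * f x z + (\<Sum>i\<in>F. c i * f i z)) \<in> hardy2"
    using insert by (intro hardy2_add hardy2_cmult) auto
  thus ?case using insert by simp
qed

lemma h2_inner_cong:
  assumes "\<And>z. z \<in> ball 0 1 \<Longrightarrow> f z = f' z" "\<And>z. z \<in> ball 0 1 \<Longrightarrow> g z = g' z"
  shows "h2_inner f g = h2_inner f' g'"
  unfolding h2_inner_def using taylor_coeff_cong[OF assms(1)] taylor_coeff_cong[OF assms(2)] by simp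

lemma h2_inner_add_left:
  assumes "f \<in> hardy2" "g \<in> hardy2" "h \<in> hardy2"
  shows "h2_inner (\<lambda>z. f z + g z) h = h2_inner f h + h2_inner g h"
  unfolding h2_inner_def using assms
  by (simp add: taylor_coeff_add hardy2_holomorphic distrib_right
      suminf_add[OF summable_h2_inner summable_h2_inner])

lemma h2_inner_diff_left:
  assumes "f \<in> hardy2" "g \<in> hardy2" "h \<in> hardy2"
  shows "h2_inner (\<lambda>z. f z - g z) h = h2_inner f h - h2_inner g h"
  unfolding h2_inner_def using assms
  by (simp add: taylor_coeff_diff hardy2_holomorphic left_diff_distrib
      suminf_diff[OF summable_h2_inner summable_h2_inner])

lemma h2_inner_cmult_left:
  assumes "f \<in> hardy2" "g \<in> hardy2"
  shows "h2_inner (\<lambda>z. c * f z) g = c * h2_inner f g"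
  unfolding h2_inner_def using assms
  by (simp add: taylor_coeff_cmult hardy2_holomorphic mult.assoc suminf_mult[OF summable_h2_inner])

lemma suminf_cnj: "summable f \<Longrightarrow> (\<Sum>n. cnj (f n)) = cnj (suminf f)"
  by (rule sums_unique[symmetric]) (simp add: sums_cnj summable_sums)

lemma h2_inner_commute:
  assumes "f \<in> hardy2" "g \<in> hardy2"
  shows "h2_inner f g = cnj (h2_inner g f)"
  unfolding h2_inner_def using suminf_cnj[OF summable_h2_inner[OF assms(2,1)]]
  by (simp add: mult.commute)

lemma h2_inner_cmult_right:
  assumes "f \<in> hardy2" "g \<in> hardy2"
  shows "h2_inner f (\<lambda>z. c * g z) = cnj c * h2_inner f g"
  using h2_inner_commute[of f "\<lambda>z. c * g z"] h2_inner_cmult_left[OF assms(2,1), of c]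
    h2_inner_commute[OF assms] hardy2_cmult[OF assms(2)] assms by simp

lemma h2_inner_sum_left:
  assumes "finite A" "\<And>i. i \<in> A \<Longrightarrow> f i \<in> hardy2" "g \<in> hardy2"
  shows "h2_inner (\<lambda>z. \<Sum>i\<in>A. c i * f i z) g = (\<Sum>i\<in>A. c i * h2_inner (f i) g)"
proof -
  have "h2_inner (\<lambda>z. \<Sum>i\<in>A. c i * f i z) g
      = (\<Sum>k. \<Sum>i\<in>A. c i * (taylor_coeff (f i) k * cnj (taylor_coeff g k)))"
    unfolding h2_inner_def using assms
    by (simp add: taylor_coeff_sum hardy2_holomorphic sum_distrib_right mult.assoc)
  also have "\<dots> = (\<Sum>i\<in>A. \<Sum>k. c i * (taylor_coeff (f i) k * cnj (taylor_coeff g k)))"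
    by (rule suminf_sum) (intro summable_mult summable_h2_inner assms; simp)
  also have "\<dots> = (\<Sum>i\<in>A. c i * h2_inner (f i) g)"
    unfolding h2_inner_def by (intro sum.cong refl) (simp add: suminf_mult summable_h2_inner assms)
  finally show ?thesis .
qed

lemma h2_inner_self_eq_0_imp_zero:
  assumes "f \<in> hardy2" "h2_inner f f = 0" "z \<in> ball 0 1"
  shows "f z = 0"
proof -
  have S: "summable (\<lambda>k. (cmod (taylor_coeff f k))\<^sup>2)"
    using hardy2_square_summable[OF assms(1)] by (simp add: square_summable_def)
  have "h2_inner f f = of_real (\<Sum>k. (cmod (taylor_coeff f k))\<^sup>2)"
    unfolding h2_inner_def complex_norm_square[symmetric] by (rule suminf_of_real[OF S, symmetric])
  hence "\<forall>k. taylor_coeff f k = 0" using assms(2) suminf_eq_zero_iff[OF S] by simp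
  hence "(\<lambda>n. 0) sums f z"
    using sums_taylor_coeff[OF hardy2_holomorphic[OF assms(1)] assms(3)] by simp
  thus ?thesis using sums_zero sums_unique2 by blast
qed

lemma holomorphic_bshift:
  assumes "f holomorphic_on ball 0 1"
  shows "bshift f holomorphic_on ball 0 1"
proof -
  have "bshift f = (\<lambda>z. if z = 0 then deriv f 0 else (f z - f 0) / (z - 0))"
    by (auto simp: bshift_def)
  with pole_lemma_open[OF assms open_ball, of 0] show ?thesis by simp
qed

lemma taylor_coeff_bshift:
  assumes "f holomorphic_on ball 0 1"
  shows "taylor_coeff (bshift f) m = taylor_coeff f (Suc m)"
  by (rule taylor_coeff_Suc_eqI[symmetric, where c = "f 0"])
    (auto simp: bshift_def intro: holomorphic_bshift assms)

lemma hardy2_bshift: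
  assumes "f \<in> hardy2"
  shows "bshift f \<in> hardy2"
proof -
  have "taylor_coeff (bshift f) = (\<lambda>k. taylor_coeff f (Suc k))"
    using assms by (auto simp: taylor_coeff_bshift hardy2_holomorphic)
  thus ?thesis using assms by (simp add: hardy2_iff holomorphic_bshift square_summable_Suc)
qed

definition szego_kernel :: "complex \<Rightarrow> complex \<Rightarrow> complex" where
  "szego_kernel w z = 1 / (1 - cnj w * z)"

lemma sums_szego_kernel:
  assumes "cmod w < 1" "z \<in> ball 0 1"
  shows "(\<lambda>n. cnj w ^ n * z ^ n) sums szego_kernel w z"
proof -
  have "cmod (cnj w * z) < 1"
    using assms by (simp add: norm_mult) (metis mult_strict_mono' norm_ge_zero mult_1_left
        less_le_trans order.strict_implies_order mult_le_one)
  from geometric_sums[OF this] show ?thesis by (simp add: szego_kernel_def power_mult_distrib)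
qed

lemma hardy2_szego_kernel: "cmod w < 1 \<Longrightarrow> szego_kernel w \<in> hardy2"
proof -
  assume w: "cmod w < 1"
  have "summable (\<lambda>n. (cmod w ^ 2) ^ n)"
    using w by (intro summable_geometric) (simp add: power_less_one_iff)
  moreover have "taylor_coeff (szego_kernel w) n = cnj w ^ n" for n
    using w by (intro taylor_coeff_eqI sums_szego_kernel)
  ultimately show ?thesis
    using w holomorphic_on_ball_if_sums[OF sums_szego_kernel[OF w]]
    by (simp add: hardy2_iff square_summable_def norm_power power_mult[symmetric] mult.commute)
qed

lemma h2_inner_szego_kernel:
  assumes "f holomorphic_on ball 0 1" "cmod w < 1"
  shows "h2_inner f (szego_kernel w) = f w"
proof -
  have "taylor_coeff (szego_kernel w) n = cnj w ^ n" for n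
    using assms(2) by (intro taylor_coeff_eqI sums_szego_kernel)
  thus ?thesis
    using sums_taylor_coeff[OF assms(1), of w] assms(2) by (simp add: h2_inner_def sums_iff)
qed

section \<open>Blaschke factors\<close>

definition blaschke :: "complex \<Rightarrow> complex \<Rightarrow> complex" where
  "blaschke a z = (z - a) / (1 - cnj a * z)"

lemma blaschke_pow_eq: "blaschke_pow a n = (\<lambda>z. blaschke a z ^ n)"
  by (simp add: blaschke_pow_def blaschke_def fun_eq_iff)

lemma blaschke_denom_nonzero: "cmod a < 1 \<Longrightarrow> z \<in> ball 0 1 \<Longrightarrow> 1 - cnj a * z \<noteq> 0"
proof
  assume "cmod a < 1" "z \<in> ball 0 1" "1 - cnj a * z = 0"
  hence "cmod a * cmod z = 1" by (metis complex_mod_cnj norm_mult norm_one right_minus_eq)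
  moreover have "cmod a * cmod z \<le> cmod a" using \<open>z \<in> ball 0 1\<close> by (intro mult_left_le) auto
  ultimately show False using \<open>cmod a < 1\<close> by simp
qed

lemma holomorphic_blaschke: "cmod a < 1 \<Longrightarrow> blaschke a holomorphic_on ball 0 1"
  unfolding blaschke_def[abs_def] by (intro holomorphic_intros) (auto dest: blaschke_denom_nonzero)

text \<open>U is the coefficient sequence of f / (1 - cnj a z).\<close>
lemma blaschke_mult_taylor_coeff:
  assumes a: "cmod a < 1" and f: "f \<in> hardy2"
  obtains U where "square_summable U" "\<And>k. taylor_coeff f k = U k - cnj a * rshift U k"
    "\<And>k. taylor_coeff (\<lambda>z. blaschke a z * f z) k = rshift U k - a * U k"
proof -
  define u where "u = (\<lambda>z. f z / (1 - cnj a * z))"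
  have uh: "u holomorphic_on ball 0 1" unfolding u_def
    by (intro holomorphic_intros hardy2_holomorphic f) (metis blaschke_denom_nonzero[OF a])
  have coeff_f: "taylor_coeff f k = taylor_coeff u k - cnj a * rshift (taylor_coeff u) k" for k
  proof -
    have "taylor_coeff f k = taylor_coeff (\<lambda>z. u z - cnj a * (z * u z)) k"
    proof (rule fun_cong[OF taylor_coeff_cong])
      fix z :: complex assume "z \<in> ball 0 1"
      have "u z - cnj a * (z * u z) = (1 - cnj a * z) * u z" by (simp add: algebra_simps)
      with blaschke_denom_nonzero[OF a \<open>z \<in> ball 0 1\<close>]
      show "f z = u z - cnj a * (z * u z)" by (simp add: u_def)
    qed
    also have "\<dots> = taylor_coeff u k - taylor_coeff (\<lambda>z. cnj a * (z * u z)) k"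
      by (rule taylor_coeff_diff) (intro holomorphic_intros uh)+
    finally show ?thesis
      by (simp add: taylor_coeff_cmult taylor_coeff_mult_z uh holomorphic_intros)
  qed
  have coeff_bf: "taylor_coeff (\<lambda>z. blaschke a z * f z) k = rshift (taylor_coeff u) k - a * taylor_coeff u k" for k
  proof -
    have "taylor_coeff (\<lambda>z. blaschke a z * f z) k = taylor_coeff (\<lambda>z. z * u z - a * u z) k"
      by (rule fun_cong[OF taylor_coeff_cong]) (simp add: u_def blaschke_def diff_divide_distrib left_diff_distrib)
    also have "\<dots> = taylor_coeff (\<lambda>z. z * u z) k - taylor_coeff (\<lambda>z. a * u z) k"
      by (rule taylor_coeff_diff) (intro holomorphic_intros uh)+
    finally show ?thesis by (simp add: taylor_coeff_cmult[OF uh] taylor_coeff_mult_z[OF uh])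
  qed
  have "square_summable (taylor_coeff u)"
    by (rule square_summable_forward_recurrence[OF hardy2_square_summable[OF f], of "cnj a"])
      (use a coeff_f in auto)
  thus ?thesis using that coeff_f coeff_bf by blast
qed

lemma hardy2_blaschke_mult:
  assumes a: "cmod a < 1" and f: "f \<in> hardy2"
  shows "(\<lambda>z. blaschke a z * f z) \<in> hardy2"
proof -
  obtain U where U: "square_summable U"
    "\<And>k. taylor_coeff (\<lambda>z. blaschke a z * f z) k = rshift U k - a * U k"
    using blaschke_mult_taylor_coeff[OF a f] by metis
  hence "taylor_coeff (\<lambda>z. blaschke a z * f z) = (\<lambda>k. rshift U k - a * U k)" by auto
  moreover have "(\<lambda>z. blaschke a z * f z) holomorphic_on ball 0 1"
    by (intro holomorphic_on_mult holomorphic_blaschke a hardy2_holomorphic f)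
  ultimately show ?thesis using U(1)
    by (simp add: hardy2_iff square_summable_diff square_summable_cmult square_summable_rshift_iff)
qed

lemma sums_rshift_mult_cnj:
  assumes "summable (\<lambda>n. U n * cnj (V n))"
  shows "(\<lambda>n. rshift U n * cnj (rshift V n)) sums (\<Sum>n. U n * cnj (V n))"
proof -
  have "(\<lambda>n. rshift U (Suc n) * cnj (rshift V (Suc n))) sums (\<Sum>n. U n * cnj (V n))"
    using summable_sums[OF assms] by (simp add: rshift_def)
  thus ?thesis by (subst (asm) sums_Suc_iff) (simp add: rshift_def)
qed

text \<open>Both sides expand into the same four series, because the right shift preserves the
  sum of U n * cnj (V n).\<close>
lemma h2_inner_blaschke_mult:
  assumes a: "cmod a < 1" and f: "f \<in> hardy2" and g: "g \<in> hardy2"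
  shows "h2_inner (\<lambda>z. blaschke a z * f z) (\<lambda>z. blaschke a z * g z) = h2_inner f g"
proof -
  obtain U where U: "square_summable U" "\<And>k. taylor_coeff f k = U k - cnj a * rshift U k"
    "\<And>k. taylor_coeff (\<lambda>z. blaschke a z * f z) k = rshift U k - a * U k"
    using blaschke_mult_taylor_coeff[OF a f] by metis
  obtain V where V: "square_summable V" "\<And>k. taylor_coeff g k = V k - cnj a * rshift V k"
    "\<And>k. taylor_coeff (\<lambda>z. blaschke a z * g z) k = rshift V k - a * V k"
    using blaschke_mult_taylor_coeff[OF a g] by metis
  have sU: "square_summable (rshift U)" and sV: "square_summable (rshift V)"
    using U V by (simp_all add: square_summable_rshift_iff)
  define P where "P = (\<Sum>n. U n * cnj (V n))"
  define R where "R = (\<Sum>n. rshift U n * cnj (V n))"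
  define T where "T = (\<Sum>n. U n * cnj (rshift V n))"
  have P: "(\<lambda>n. U n * cnj (V n)) sums P" and PS: "(\<lambda>n. rshift U n * cnj (rshift V n)) sums P"
    and R: "(\<lambda>n. rshift U n * cnj (V n)) sums R" and T: "(\<lambda>n. U n * cnj (rshift V n)) sums T"
    unfolding P_def R_def T_def
    by (intro summable_sums sums_rshift_mult_cnj summable_mult_cnj U V sU sV)+
  have "(\<lambda>n. (rshift U n - a * U n) * cnj (rshift V n - a * V n))
          sums (P - cnj a * R - a * T + a * cnj a * P)"
  proof -
    have "(\<lambda>n. rshift U n * cnj (rshift V n) - cnj a * (rshift U n * cnj (V n))
             - a * (U n * cnj (rshift V n)) + a * cnj a * (U n * cnj (V n)))
          sums (P - cnj a * R - a * T + a * cnj a * P)"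
      by (intro sums_add sums_diff sums_mult P PS R T)
    thus ?thesis by (simp add: algebra_simps)
  qed
  hence "h2_inner (\<lambda>z. blaschke a z * f z) (\<lambda>z. blaschke a z * g z)
      = P - cnj a * R - a * T + a * cnj a * P"
    unfolding h2_inner_def by (simp add: U(3) V(3) sums_iff)
  moreover have "(\<lambda>n. (U n - cnj a * rshift U n) * cnj (V n - cnj a * rshift V n))
          sums (P - a * T - cnj a * R + cnj a * a * P)"
  proof -
    have "(\<lambda>n. U n * cnj (V n) - a * (U n * cnj (rshift V n)) - cnj a * (rshift U n * cnj (V n))
             + cnj a * a * (rshift U n * cnj (rshift V n)))
          sums (P - a * T - cnj a * R + cnj a * a * P)"
      by (intro sums_add sums_diff sums_mult P PS R T)
    thus ?thesis by (simp add: algebra_simps)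
  qed
  hence "h2_inner f g = P - a * T - cnj a * R + cnj a * a * P"
    unfolding h2_inner_def by (simp add: U(2) V(2) sums_iff)
  ultimately show ?thesis by simp
qed

lemma hardy2_blaschke_power_mult:
  assumes "cmod a < 1" "f \<in> hardy2"
  shows "(\<lambda>z. blaschke a z ^ m * f z) \<in> hardy2"
proof (induction m)
  case (Suc m)
  from hardy2_blaschke_mult[OF assms(1) Suc] show ?case by (simp add: mult.assoc)
qed (use assms in simp)

lemma hardy2_blaschke_pow_mult:
  "cmod a < 1 \<Longrightarrow> g \<in> hardy2 \<Longrightarrow> (\<lambda>z. blaschke_pow a n z * g z) \<in> hardy2"
  unfolding blaschke_pow_eq by (rule hardy2_blaschke_power_mult)

lemma h2_inner_blaschke_power_mult:
  assumes a: "cmod a < 1" and f: "f \<in> hardy2" and g: "g \<in> hardy2"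
  shows "h2_inner (\<lambda>z. blaschke a z ^ m * f z) (\<lambda>z. blaschke a z ^ m * g z) = h2_inner f g"
proof (induction m)
  case (Suc m)
  with h2_inner_blaschke_mult[OF a hardy2_blaschke_power_mult[OF a f] hardy2_blaschke_power_mult[OF a g]]
  show ?case by (simp add: mult.assoc)
qed simp

section \<open>Division by a Blaschke factor\<close>

lemma norm_le_if_backward_recurrence:
  assumes a0: "a \<noteq> 0" and a: "cmod a < 1" and M: "\<And>j. cmod (f j) \<le> M"
    and rec: "\<And>k. Q k = f k + a * Q (Suc k)"
    and lim: "(\<lambda>j. Q j * a ^ j) \<longlonglongrightarrow> 0"
  shows "cmod (Q k) \<le> M / (1 - cmod a)"
proof -
  have M0: "0 \<le> M" using M[of 0] norm_ge_zero order.trans by blast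
  have unfold: "Q k = (\<Sum>i<m. a ^ i * f (k + i)) + a ^ m * Q (k + m)" for m
  proof (induction m)
    case (Suc m)
    have "a ^ m * Q (k + m) = a ^ m * f (k + m) + a ^ Suc m * Q (k + Suc m)"
      by (subst rec) (simp add: algebra_simps)
    with Suc show ?case by simp
  qed simp
  have le: "cmod (Q k) \<le> M / (1 - cmod a) + cmod a ^ m * cmod (Q (k + m))" for m
  proof -
    have "cmod (Q k) \<le> cmod (\<Sum>i<m. a ^ i * f (k + i)) + cmod (a ^ m * Q (k + m))"
      by (subst unfold[of m]) (rule norm_triangle_ineq)
    also have "cmod (\<Sum>i<m. a ^ i * f (k + i)) \<le> (\<Sum>i<m. cmod a ^ i * M)"
      by (rule order.trans[OF norm_sum sum_mono])
        (auto simp: norm_mult norm_power intro: mult_left_mono M)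
    also have "\<dots> = M * (\<Sum>i<m. cmod a ^ i)" by (simp add: sum_distrib_left mult.commute)
    also have "(\<Sum>i<m. cmod a ^ i) = (1 - cmod a ^ m) / (1 - cmod a)"
      using a by (subst sum_gp_strict) auto
    also have "\<dots> \<le> 1 / (1 - cmod a)" using a by (intro divide_right_mono) auto
    finally show ?thesis using M0 by (simp add: norm_mult norm_power mult_left_mono)
  qed
  have "(\<lambda>m. cmod (Q (m + k) * a ^ (m + k)) / cmod a ^ k) \<longlonglongrightarrow> 0"
    by (intro tendsto_divide_zero tendsto_norm_zero LIMSEQ_ignore_initial_segment lim)
  moreover have "cmod (Q (m + k) * a ^ (m + k)) / cmod a ^ k = cmod a ^ m * cmod (Q (k + m))" for m
    using a0 by (simp add: norm_mult norm_power power_add add.commute)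
  ultimately have "(\<lambda>m. M / (1 - cmod a) + cmod a ^ m * cmod (Q (k + m))) \<longlonglongrightarrow> M / (1 - cmod a) + 0"
    by (intro tendsto_add tendsto_const) simp
  with le show ?thesis using LIMSEQ_le_const by fastforce
qed

lemma square_summable_backward_recurrence:
  assumes f: "square_summable f" and a: "cmod a < 1" and B: "\<And>k. cmod (Q k) \<le> B"
    and rec: "\<And>k. Q k = f k + a * Q (Suc k)"
  shows "square_summable Q"
proof (rule square_summable_if_le_contraction[OF f _ a])
  show "cmod (Q k) \<le> cmod (f k) + cmod a * cmod (Q (Suc k))" for k
    using norm_triangle_ineq[of "f k" "a * Q (Suc k)"] rec[of k] by (simp add: norm_mult)
  show "L2_set (\<lambda>k. cmod (Q (Suc k))) {..N} \<le> L2_set (\<lambda>k. cmod (Q k)) {..N} + B" for N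
  proof -
    have "(\<Sum>k\<le>N. (cmod (Q (Suc k)))\<^sup>2) \<le> (\<Sum>k\<le>N. (cmod (Q k))\<^sup>2) + (cmod (Q (Suc N)))\<^sup>2"
      using sum.atMost_Suc_shift[of "\<lambda>k. (cmod (Q k))\<^sup>2" N] by simp
    hence "L2_set (\<lambda>k. cmod (Q (Suc k))) {..N} \<le> sqrt ((\<Sum>k\<le>N. (cmod (Q k))\<^sup>2) + (cmod (Q (Suc N)))\<^sup>2)"
      unfolding L2_set_def by (rule real_sqrt_le_mono)
    also have "\<dots> \<le> L2_set (\<lambda>k. cmod (Q k)) {..N} + sqrt ((cmod (Q (Suc N)))\<^sup>2)"
      unfolding L2_set_def by (intro sqrt_add_le_add_sqrt sum_nonneg) auto
    also have "sqrt ((cmod (Q (Suc N)))\<^sup>2) \<le> B" using B by simp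
    finally show ?thesis by simp
  qed
qed simp

text \<open>With Q the coefficients of q, the relation f = (z - a) q reads
  Q k = taylor_coeff f (k + 1) + a Q (k + 1); Q is bounded because Q k a^k is summable.\<close>
lemma square_summable_taylor_coeff_quotient:
  assumes a: "cmod a < 1" and f: "f \<in> hardy2" and q: "q holomorphic_on ball 0 1"
    and fq: "\<And>z. z \<in> ball 0 1 \<Longrightarrow> f z = (z - a) * q z"
  shows "square_summable (taylor_coeff q)"
proof -
  define Q where "Q = taylor_coeff q"
  have "taylor_coeff f k = taylor_coeff (\<lambda>z. z * q z - a * q z) k" for k
    by (rule fun_cong[OF taylor_coeff_cong]) (simp add: fq algebra_simps)
  hence "taylor_coeff f k = rshift Q k - a * Q k" for k
    by (simp add: taylor_coeff_diff taylor_coeff_mult_z taylor_coeff_cmult q holomorphic_intros Q_def)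
  hence rec: "Q k = taylor_coeff f (Suc k) + a * Q (Suc k)" for k
    by (simp add: rshift_def)
  have sf: "square_summable (\<lambda>k. taylor_coeff f (Suc k))"
    by (intro square_summable_Suc hardy2_square_summable f)
  show ?thesis
  proof (cases "a = 0")
    case True
    with rec have "Q = (\<lambda>k. taylor_coeff f (Suc k))" by auto
    with sf show ?thesis by (simp add: Q_def)
  next
    case False
    define M where "M = sqrt (\<Sum>k. (cmod (taylor_coeff f k))\<^sup>2)"
    have "(cmod (taylor_coeff f j))\<^sup>2 \<le> (\<Sum>k. (cmod (taylor_coeff f k))\<^sup>2)" for j
      using hardy2_square_summable[OF f] sum_le_suminf[of "\<lambda>k. (cmod (taylor_coeff f k))\<^sup>2" "{j}"]
      by (simp add: square_summable_def)
    hence M: "cmod (taylor_coeff f j) \<le> M" for j unfolding M_def by (metis real_le_rsqrt)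
    have "summable (\<lambda>n. Q n * a ^ n)"
      using sums_taylor_coeff[OF q, of a] a by (simp add: Q_def sums_iff)
    hence "(\<lambda>j. Q j * a ^ j) \<longlonglongrightarrow> 0" by (rule summable_LIMSEQ_zero)
    hence "cmod (Q k) \<le> M / (1 - cmod a)" for k
      by (rule norm_le_if_backward_recurrence[where f = "\<lambda>k. taylor_coeff f (Suc k)", OF False a M rec])
    from square_summable_backward_recurrence[OF sf a this rec] show ?thesis by (simp add: Q_def)
  qed
qed

lemma blaschke_division:
  assumes a: "cmod a < 1" and f: "f \<in> hardy2" and fa: "f a = 0"
  obtains g where "g \<in> hardy2" "\<And>z. z \<in> ball 0 1 \<Longrightarrow> f z = blaschke a z * g z"
proof -
  define q where "q = (\<lambda>z. if z = a then deriv f a else (f z - f a) / (z - a))"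
  have q: "q holomorphic_on ball 0 1"
    unfolding q_def by (rule pole_lemma_open[OF hardy2_holomorphic[OF f]]) auto
  have fq: "f z = (z - a) * q z" for z
    using fa by (cases "z = a") (auto simp: q_def)
  define g where "g = (\<lambda>z. q z - cnj a * (z * q z))"
  have "taylor_coeff g = (\<lambda>k. taylor_coeff q k - cnj a * rshift (taylor_coeff q) k)"
    by (auto simp: g_def taylor_coeff_diff taylor_coeff_cmult taylor_coeff_mult_z q holomorphic_intros)
  hence "g \<in> hardy2"
    using square_summable_taylor_coeff_quotient[OF a f q fq]
    by (auto simp: hardy2_iff g_def q holomorphic_intros square_summable_diff square_summable_cmult
        square_summable_rshift_iff)
  moreover have "f z = blaschke a z * g z" if "z \<in> ball 0 1" for z
  proof -
    have "g z = (1 - cnj a * z) * q z" by (simp add: g_def algebra_simps)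
    with blaschke_denom_nonzero[OF a that] show ?thesis by (simp add: fq blaschke_def)
  qed
  ultimately show ?thesis using that by blast
qed

section \<open>The orthonormal basis of the model space\<close>

lemma ebasis_eq: "ebasis a k = (\<lambda>z. blaschke a z ^ (k - 1) * ebasis a 1 z)"
  by (simp add: ebasis_def blaschke_def fun_eq_iff mult.commute)

lemma ebasis_Suc: "k \<ge> 1 \<Longrightarrow> ebasis a (Suc k) z = blaschke a z * ebasis a k z"
  by (cases k) (simp_all add: ebasis_def blaschke_def)

lemma ebasis_one_eq:
  "ebasis a 1 = (\<lambda>z. of_real (sqrt (1 - (cmod a)\<^sup>2)) * szego_kernel a z)"
  by (simp add: ebasis_def szego_kernel_def fun_eq_iff)

lemma hardy2_ebasis: "cmod a < 1 \<Longrightarrow> ebasis a k \<in> hardy2"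
  unfolding ebasis_eq[of a k] ebasis_one_eq
  by (intro hardy2_blaschke_power_mult hardy2_cmult hardy2_szego_kernel)

lemma h2_inner_ebasis_one:
  "cmod a < 1 \<Longrightarrow> f \<in> hardy2 \<Longrightarrow> h2_inner f (ebasis a 1) = of_real (sqrt (1 - (cmod a)\<^sup>2)) * f a"
  unfolding ebasis_one_eq
  by (subst h2_inner_cmult_right)
    (auto intro: hardy2_szego_kernel simp: h2_inner_szego_kernel hardy2_holomorphic)

lemma ebasis_one_center: "cmod a < 1 \<Longrightarrow> of_real (sqrt (1 - (cmod a)\<^sup>2)) * ebasis a 1 a = 1"
proof -
  assume "cmod a < 1"
  define x where "x = 1 - (cmod a)\<^sup>2"
  have pos: "0 < x" unfolding x_def using \<open>cmod a < 1\<close> by (simp add: abs_square_less_1)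
  have "1 - cnj a * a = of_real x"
    unfolding x_def using complex_norm_square[of a] by (simp add: mult.commute)
  hence "ebasis a 1 a = of_real (sqrt x) / of_real x" by (simp add: ebasis_def x_def)
  moreover have "sqrt x * (sqrt x / x) = 1"
    using pos real_sqrt_mult_self[of x] by (metis abs_of_pos divide_self less_irrefl times_divide_eq_right)
  ultimately show ?thesis unfolding x_def[symmetric]
    by (metis of_real_1 of_real_divide of_real_mult)
qed

text \<open>The factor blaschke a ^ p cancels isometrically; what remains vanishes at a and is
  therefore orthogonal to e_1, a multiple of the reproducing kernel at a.\<close>
lemma h2_inner_ebasis_blaschke_power_mult:
  assumes a: "cmod a < 1" and G: "G \<in> hardy2" and pm: "p < m"
  shows "h2_inner (ebasis a (Suc p)) (\<lambda>z. blaschke a z ^ m * G z) = 0"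
proof -
  let ?G = "\<lambda>z. blaschke a z ^ (m - p) * G z"
  have GH: "?G \<in> hardy2" by (intro hardy2_blaschke_power_mult a G)
  have "(\<lambda>z. blaschke a z ^ m * G z) = (\<lambda>z. blaschke a z ^ p * ?G z)"
    using pm by (simp add: fun_eq_iff mult.assoc[symmetric] power_add[symmetric])
  hence "h2_inner (ebasis a (Suc p)) (\<lambda>z. blaschke a z ^ m * G z) = h2_inner (ebasis a 1) ?G"
    by (simp add: ebasis_eq[of a "Suc p"] h2_inner_blaschke_power_mult a hardy2_ebasis GH)
  also have "\<dots> = cnj (h2_inner ?G (ebasis a 1))"
    by (rule h2_inner_commute[OF hardy2_ebasis[OF a] GH])
  also have "h2_inner ?G (ebasis a 1) = of_real (sqrt (1 - (cmod a)\<^sup>2)) * ?G a"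
    by (rule h2_inner_ebasis_one[OF a GH])
  also have "cnj \<dots> = 0" using pm by (simp add: blaschke_def)
  finally show ?thesis .
qed

lemma ebasis_orthonormal:
  assumes a: "cmod a < 1" and "j \<ge> 1" "k \<ge> 1"
  shows "h2_inner (ebasis a j) (ebasis a k) = (if j = k then 1 else 0)"
proof -
  note e = hardy2_ebasis[OF a]
  have lt: "h2_inner (ebasis a (Suc p)) (ebasis a (Suc q)) = 0" if "p < q" for p q
    using h2_inner_ebasis_blaschke_power_mult[OF a e[of 1] that] by (simp add: ebasis_eq[of a "Suc q"])
  obtain p q where pq: "j = Suc p" "k = Suc q"
    using assms(2,3) by (cases j; cases k) auto
  consider "p < q" | "p = q" | "q < p" by linarith
  thus ?thesis
  proof cases
    case 1
    with lt pq show ?thesis by simp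
  next
    case 2
    have "h2_inner (ebasis a j) (ebasis a k) = h2_inner (ebasis a 1) (ebasis a 1)"
      using h2_inner_blaschke_power_mult[OF a e[of 1] e[of 1], of q] pq 2
      by (simp add: ebasis_eq[of a "Suc q"])
    also have "\<dots> = of_real (sqrt (1 - (cmod a)\<^sup>2)) * ebasis a 1 a"
      by (rule h2_inner_ebasis_one[OF a e])
    also have "\<dots> = 1" by (rule ebasis_one_center[OF a])
    finally show ?thesis using 2 pq by simp
  next
    case 3
    have "h2_inner (ebasis a j) (ebasis a k) = cnj (h2_inner (ebasis a k) (ebasis a j))"
      by (rule h2_inner_commute[OF e e])
    with lt[OF 3] pq 3 show ?thesis by simp
  qed
qed

lemma ebasis_in_model_space:
  assumes a: "cmod a < 1" and k: "k \<in> {1..n}"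
  shows "ebasis a k \<in> model_space (blaschke_pow a n)"
proof -
  obtain p where p: "k = Suc p" "p < n" using k by (cases k) auto
  have "h2_inner (ebasis a k) (\<lambda>z. blaschke_pow a n z * g z) = 0" if "g \<in> hardy2" for g
    using h2_inner_ebasis_blaschke_power_mult[OF a that p(2)] p(1) by (simp add: blaschke_pow_eq)
  thus ?thesis by (simp add: model_space_def hardy2_ebasis[OF a])
qed

lemma model_space_Suc_quotient:
  assumes a: "cmod a < 1" and f: "f \<in> model_space (blaschke_pow a (Suc n))" and g: "g \<in> hardy2"
    and fg: "\<And>z. z \<in> ball 0 1 \<Longrightarrow>
               f z - h2_inner f (ebasis a 1) * ebasis a 1 z = blaschke a z * g z"
  shows "g \<in> model_space (blaschke_pow a n)"
  unfolding model_space_def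
proof (intro CollectI conjI ballI g)
  fix G assume G: "G \<in> hardy2"
  let ?e = "ebasis a 1" and ?c = "h2_inner f (ebasis a 1)"
  let ?PG = "\<lambda>z. blaschke_pow a n z * G z" and ?PG' = "\<lambda>z. blaschke_pow a (Suc n) z * G z"
  have fH: "f \<in> hardy2" using f by (simp add: model_space_def)
  have PG: "?PG \<in> hardy2" and PG': "?PG' \<in> hardy2"
    by (intro hardy2_blaschke_pow_mult a G)+
  have "h2_inner g ?PG = h2_inner (\<lambda>z. blaschke a z * g z) (\<lambda>z. blaschke a z * ?PG z)"
    by (rule h2_inner_blaschke_mult[OF a g PG, symmetric])
  also have "\<dots> = h2_inner (\<lambda>z. f z - ?c * ?e z) ?PG'"
    by (rule h2_inner_cong) (auto simp: fg blaschke_pow_eq simp del: One_nat_def)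
  also have "\<dots> = h2_inner f ?PG' - ?c * h2_inner ?e ?PG'"
    by (simp add: h2_inner_diff_left h2_inner_cmult_left fH hardy2_cmult hardy2_ebasis a PG')
  also have "\<dots> = 0"
    using f G ebasis_in_model_space[OF a, of 1 "Suc n"] by (simp add: model_space_def)
  finally show "h2_inner g ?PG = 0" .
qed

lemma h2_inner_ebasis_Suc_quotient:
  assumes a: "cmod a < 1" and f: "f \<in> hardy2" and g: "g \<in> hardy2" and k: "k \<ge> 1"
    and fg: "\<And>z. z \<in> ball 0 1 \<Longrightarrow>
               f z - h2_inner f (ebasis a 1) * ebasis a 1 z = blaschke a z * g z"
  shows "h2_inner f (ebasis a (Suc k)) = h2_inner g (ebasis a k)"
proof -
  let ?e = "ebasis a 1" and ?c = "h2_inner f (ebasis a 1)"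
  note e = hardy2_ebasis[OF a]
  have "h2_inner f (ebasis a (Suc k))
      = h2_inner (\<lambda>z. f z - ?c * ?e z) (ebasis a (Suc k)) + ?c * h2_inner ?e (ebasis a (Suc k))"
    by (simp add: h2_inner_diff_left h2_inner_cmult_left f e hardy2_cmult)
  also have "h2_inner ?e (ebasis a (Suc k)) = 0" using ebasis_orthonormal[OF a, of 1 "Suc k"] k by simp
  also have "h2_inner (\<lambda>z. f z - ?c * ?e z) (ebasis a (Suc k))
      = h2_inner (\<lambda>z. blaschke a z * g z) (\<lambda>z. blaschke a z * ebasis a k z)"
    by (rule h2_inner_cong) (use k in \<open>auto simp: fg ebasis_Suc simp del: One_nat_def\<close>)
  also have "\<dots> = h2_inner g (ebasis a k)" by (rule h2_inner_blaschke_mult[OF a g e])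
  finally show ?thesis by simp
qed

lemma model_space_expansion:
  assumes a: "cmod a < 1"
  shows "f \<in> model_space (blaschke_pow a n) \<Longrightarrow> z \<in> ball 0 1 \<Longrightarrow>
         f z = (\<Sum>k=1..n. h2_inner f (ebasis a k) * ebasis a k z)"
proof (induction n arbitrary: f z)
  case 0
  hence "h2_inner f f = 0" by (simp add: model_space_def blaschke_pow_def)
  with 0 show ?case by (simp add: h2_inner_self_eq_0_imp_zero model_space_def)
next
  case (Suc n)
  let ?e = "ebasis a 1" and ?c = "h2_inner f (ebasis a 1)"
  have fH: "f \<in> hardy2" using Suc.prems(1) by (simp add: model_space_def)
  have "?c = of_real (sqrt (1 - (cmod a)\<^sup>2)) * f a" by (rule h2_inner_ebasis_one[OF a fH])
  hence "f a - ?c * ?e a = 0" using ebasis_one_center[OF a] by (simp add: algebra_simps)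
  then obtain g where g: "g \<in> hardy2"
    and fg: "\<And>z. z \<in> ball 0 1 \<Longrightarrow> f z - ?c * ?e z = blaschke a z * g z"
    using blaschke_division[OF a hardy2_diff[OF fH hardy2_cmult[OF hardy2_ebasis[OF a]]]] by metis
  have "g z = (\<Sum>k=1..n. h2_inner g (ebasis a k) * ebasis a k z)"
    by (rule Suc.IH[OF model_space_Suc_quotient[OF a Suc.prems(1) g fg] Suc.prems(2)])
  hence "blaschke a z * g z = (\<Sum>k=1..n. h2_inner g (ebasis a k) * (blaschke a z * ebasis a k z))"
    by (simp add: sum_distrib_left algebra_simps)
  also have "\<dots> = (\<Sum>k=1..n. h2_inner f (ebasis a (Suc k)) * ebasis a (Suc k) z)"
  proof (rule sum.cong[OF refl])
    fix k assume "k \<in> {1..n}"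
    hence k: "k \<ge> 1" by simp
    show "h2_inner g (ebasis a k) * (blaschke a z * ebasis a k z)
        = h2_inner f (ebasis a (Suc k)) * ebasis a (Suc k) z"
      using h2_inner_ebasis_Suc_quotient[OF a fH g k fg] by (simp add: ebasis_Suc[OF k])
  qed
  finally have "f z = ?c * ?e z + (\<Sum>k=1..n. h2_inner f (ebasis a (Suc k)) * ebasis a (Suc k) z)"
    using fg[OF Suc.prems(2)] by (simp add: algebra_simps del: One_nat_def)
  also have "\<dots> = (\<Sum>k=1..Suc n. h2_inner f (ebasis a k) * ebasis a k z)"
    using sum.atLeast_Suc_atMost[of 1 "Suc n" "\<lambda>k. h2_inner f (ebasis a k) * ebasis a k z"]
      sum.shift_bounds_cl_Suc_ivl[of "\<lambda>k. h2_inner f (ebasis a k) * ebasis a k z" 1 n]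
    by (simp del: One_nat_def sum.cl_ivl_Suc)
  finally show ?case .
qed

text \<open>The combination of the e_i whose coefficients form column j of
  (S_n^* + cnj a) (1 + a S_n^*)^-1.\<close>
definition Sstar_ebasis :: "complex \<Rightarrow> nat \<Rightarrow> complex \<Rightarrow> complex" where
  "Sstar_ebasis a j z = cnj a * ebasis a j z
     + (1 - a * cnj a) * (\<Sum>i\<in>{1..<j}. (-a) ^ (j - 1 - i) * ebasis a i z)"

lemma Sstar_ebasis_Suc:
  "Sstar_ebasis a (Suc (Suc p)) z = cnj a * ebasis a (Suc (Suc p)) z
     + (1 - a * cnj a) * (ebasis a (Suc p) z
        + (-a) * (\<Sum>i\<in>{1..<Suc p}. (-a) ^ (Suc p - 1 - i) * ebasis a i z))"
proof -
  have "{1..<Suc (Suc p)} = insert (Suc p) {1..<Suc p}" by auto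
  hence "(\<Sum>i\<in>{1..<Suc (Suc p)}. (-a) ^ (Suc (Suc p) - 1 - i) * ebasis a i z)
      = ebasis a (Suc p) z + (\<Sum>i\<in>{1..<Suc p}. (-a) ^ (Suc p - i) * ebasis a i z)"
    by simp
  also have "(\<Sum>i\<in>{1..<Suc p}. (-a) ^ (Suc p - i) * ebasis a i z)
      = (-a) * (\<Sum>i\<in>{1..<Suc p}. (-a) ^ (Suc p - 1 - i) * ebasis a i z)"
    unfolding sum_distrib_left by (intro sum.cong refl) (auto simp: Suc_diff_le)
  finally have S: "(\<Sum>i\<in>{1..<Suc (Suc p)}. (-a) ^ (Suc (Suc p) - 1 - i) * ebasis a i z)
      = ebasis a (Suc p) z + (-a) * (\<Sum>i\<in>{1..<Suc p}. (-a) ^ (Suc p - 1 - i) * ebasis a i z)" .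
  show ?thesis by (simp only: Sstar_ebasis_def S)
qed

text \<open>Since bshift f = (f - f 0) / z, this identifies the backward shift of e_j with
  Sstar_ebasis a j. The induction step uses z cnj a (blaschke a z) + z - a = blaschke a z.\<close>
lemma ebasis_eq_center_plus_Sstar_ebasis:
  assumes nz: "1 - cnj a * z \<noteq> 0"
  shows "ebasis a (Suc p) z = ebasis a (Suc p) 0 + z * Sstar_ebasis a (Suc p) z"
proof (induction p)
  case 0
  have "ebasis a 1 z = of_real (sqrt (1 - (cmod a)\<^sup>2)) / (1 - cnj a * z)"
    and "ebasis a 1 0 = of_real (sqrt (1 - (cmod a)\<^sup>2))"
    by (simp_all add: ebasis_def)
  with nz show ?case by (simp add: Sstar_ebasis_def field_simps)
next
  case (Suc p)
  define E where "E = ebasis a (Suc p) z"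
  define E0 where "E0 = ebasis a (Suc p) 0"
  define T where "T = (\<Sum>i\<in>{1..<Suc p}. (-a) ^ (Suc p - 1 - i) * ebasis a i z)"
  define b where "b = blaschke a z"
  have IH: "E = E0 + z * (cnj a * E + (1 - a * cnj a) * T)"
    using Suc by (simp add: E_def E0_def T_def Sstar_ebasis_def)
  have K: "z * cnj a * b + z - a = b"
    using nz unfolding b_def blaschke_def by (simp add: field_simps)
  have e: "ebasis a (Suc (Suc p)) z = b * E" unfolding b_def E_def by (rule ebasis_Suc) simp
  have e0: "ebasis a (Suc (Suc p)) 0 = - a * E0"
    unfolding E0_def using ebasis_Suc[of "Suc p" a 0] by (simp add: blaschke_def)
  have S: "Sstar_ebasis a (Suc (Suc p)) z = cnj a * (b * E) + (1 - a * cnj a) * (E + (-a) * T)"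
    unfolding Sstar_ebasis_Suc e T_def E_def ..
  have "- a * E0 + z * (cnj a * (b * E) + (1 - a * cnj a) * (E + - a * T)) - b * E
     = (-a) * (E0 + z * (cnj a * E + (1 - a * cnj a) * T) - E) + E * (z * cnj a * b + z - a - b)"
    by (simp add: algebra_simps)
  also have "\<dots> = 0" using IH K by simp
  finally show ?case unfolding e e0 S by simp
qed

lemma hardy2_Sstar_ebasis: "cmod a < 1 \<Longrightarrow> Sstar_ebasis a j \<in> hardy2"
  unfolding Sstar_ebasis_def[abs_def]
  by (intro hardy2_add hardy2_cmult hardy2_sum hardy2_ebasis) auto

lemma taylor_coeff_bshift_ebasis:
  assumes a: "cmod a < 1" and j: "j \<ge> 1"
  shows "taylor_coeff (bshift (ebasis a j)) = taylor_coeff (Sstar_ebasis a j)"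
proof
  fix m
  obtain p where p: "j = Suc p" using j by (cases j) auto
  have "taylor_coeff (bshift (ebasis a j)) m = taylor_coeff (ebasis a j) (Suc m)"
    by (intro taylor_coeff_bshift hardy2_holomorphic hardy2_ebasis a)
  also have "\<dots> = taylor_coeff (Sstar_ebasis a j) m"
    by (rule taylor_coeff_Suc_eqI[OF hardy2_holomorphic[OF hardy2_Sstar_ebasis[OF a]]])
      (use blaschke_denom_nonzero[OF a] ebasis_eq_center_plus_Sstar_ebasis p in blast)
  finally show "taylor_coeff (bshift (ebasis a j)) m = taylor_coeff (Sstar_ebasis a j) m" .
qed

lemma h2_inner_bshift_ebasis:
  assumes a: "cmod a < 1" and i: "i \<ge> 1" and j: "j \<ge> 1"
  shows "h2_inner (bshift (ebasis a j)) (ebasis a i)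
       = (if i = j then cnj a else 0) + (1 - a * cnj a) * (if i < j then (-a) ^ (j - 1 - i) else 0)"
proof -
  note e = hardy2_ebasis[OF a]
  define S where "S = (\<lambda>z. \<Sum>l\<in>{1..<j}. (-a) ^ (j - 1 - l) * ebasis a l z)"
  have S: "S \<in> hardy2" unfolding S_def by (intro hardy2_sum e) auto
  have "h2_inner (bshift (ebasis a j)) (ebasis a i) = h2_inner (Sstar_ebasis a j) (ebasis a i)"
    unfolding h2_inner_def taylor_coeff_bshift_ebasis[OF a j] ..
  also have "Sstar_ebasis a j = (\<lambda>z. cnj a * ebasis a j z + (1 - a * cnj a) * S z)"
    by (simp add: Sstar_ebasis_def[abs_def] S_def)
  also have "h2_inner \<dots> (ebasis a i)
      = cnj a * h2_inner (ebasis a j) (ebasis a i) + (1 - a * cnj a) * h2_inner S (ebasis a i)"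
    by (simp add: h2_inner_add_left h2_inner_cmult_left hardy2_cmult e S)
  also have "h2_inner S (ebasis a i)
      = (\<Sum>l\<in>{1..<j}. (-a) ^ (j - 1 - l) * h2_inner (ebasis a l) (ebasis a i))"
    unfolding S_def by (rule h2_inner_sum_left) (auto intro!: e)
  also have "\<dots> = (\<Sum>l\<in>{1..<j}. if l = i then (-a) ^ (j - 1 - l) else 0)"
    by (intro sum.cong refl) (auto simp: ebasis_orthonormal[OF a _ i])
  also have "\<dots> = (if i < j then (-a) ^ (j - 1 - i) else 0)"
    using i by (simp add: sum.delta')
  finally show ?thesis using ebasis_orthonormal[OF a j i] by auto
qed

section \<open>The matrix of the compressed backward shift\<close>

text \<open>The inverse of 1 + a S_n^*, i.e. the sum of (-a)^k (S_n^*)^k.\<close>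
definition geometric_upper_mat :: "nat \<Rightarrow> complex \<Rightarrow> complex mat" where
  "geometric_upper_mat n a = mat n n (\<lambda>(i, j). if i \<le> j then (-a) ^ (j - i) else 0)"

lemma index_transpose_shift_mat:
  "i < n \<Longrightarrow> k < n \<Longrightarrow> transpose_mat (shift_mat n) $$ (i, k) = (if k = Suc i then 1 else 0)"
  by (simp add: shift_mat_def)

lemma index_one_plus_shift_mat:
  assumes "i < n" "k < n"
  shows "(1\<^sub>m n + a \<cdot>\<^sub>m transpose_mat (shift_mat n)) $$ (i, k)
       = (if k = i then 1 else 0) + (if k = Suc i then a else 0)"
proof -
  have "transpose_mat (shift_mat n) $$ (i, k) = (if k = Suc i then 1 else 0)"
    by (rule index_transpose_shift_mat[OF assms])
  moreover have "shift_mat n \<in> carrier_mat n n" by (simp add: shift_mat_def)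
  ultimately show ?thesis using assms by (simp del: index_transpose_mat(1))
qed

lemma index_shift_plus_diag_mat:
  assumes "i < n" "k < n"
  shows "(transpose_mat (shift_mat n) + c \<cdot>\<^sub>m 1\<^sub>m n) $$ (i, k)
       = (if k = i then c else 0) + (if k = Suc i then 1 else 0)"
proof -
  have "transpose_mat (shift_mat n) $$ (i, k) = (if k = Suc i then 1 else 0)"
    by (rule index_transpose_shift_mat[OF assms])
  moreover have "shift_mat n \<in> carrier_mat n n" by (simp add: shift_mat_def)
  ultimately show ?thesis using assms by (simp del: index_transpose_mat(1))
qed

lemma index_mult_bidiagonal_geometric_upper_mat:
  assumes B: "B \<in> carrier_mat n n"
    and Bik: "\<And>k. k < n \<Longrightarrow> B $$ (i, k) = (if k = i then x else 0) + (if k = Suc i then y else 0)"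
    and i: "i < n" and j: "j < n"
  shows "(B * geometric_upper_mat n a) $$ (i, j)
       = (if i = j then x else 0) + (if i < j then (y - a * x) * (-a) ^ (j - Suc i) else 0)"
proof -
  let ?N = "geometric_upper_mat n a"
  have "(B * ?N) $$ (i, j) = (\<Sum>k<n. B $$ (i, k) * ?N $$ (k, j))"
    using B i j by (simp add: geometric_upper_mat_def scalar_prod_def atLeast0LessThan)
  also have "\<dots> = (\<Sum>k<n. (if k = i then x * ?N $$ (k, j) else 0)
                          + (if k = Suc i then y * ?N $$ (k, j) else 0))"
    by (intro sum.cong refl) (simp add: Bik distrib_right)
  also have "\<dots> = x * ?N $$ (i, j) + (if Suc i < n then y * ?N $$ (Suc i, j) else 0)"
    using i by (simp add: sum.distrib sum.delta')
  also have "\<dots> = (if i = j then x else 0) + (if i < j then (y - a * x) * (-a) ^ (j - Suc i) else 0)"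
  proof (cases "i < j")
    case True
    hence "j - i = Suc (j - Suc i)" by simp
    with True i j show ?thesis by (simp add: geometric_upper_mat_def algebra_simps)
  qed (use i j in \<open>auto simp: geometric_upper_mat_def\<close>)
  finally show ?thesis .
qed

lemma mat_inverse_one_plus_shift_mat:
  "mat_inverse (1\<^sub>m n + a \<cdot>\<^sub>m transpose_mat (shift_mat n)) = Some (geometric_upper_mat n a)"
proof -
  let ?A = "1\<^sub>m n + a \<cdot>\<^sub>m transpose_mat (shift_mat n)" and ?N = "geometric_upper_mat n a"
  have A: "?A \<in> carrier_mat n n" and N: "?N \<in> carrier_mat n n"
    by (simp_all add: shift_mat_def geometric_upper_mat_def)
  have AN: "?A * ?N = 1\<^sub>m n"
    by (rule eq_matI)
      (use A N in \<open>auto simp: index_mult_bidiagonal_geometric_upper_mat[OF A index_one_plus_shift_mat]\<close>)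
  hence "?A \<in> Units (ring_mat TYPE(complex) n ())"
    using A N mat_mult_left_right_inverse[OF A N AN] by (auto simp: Units_def ring_mat_def)
  then obtain M where M: "mat_inverse ?A = Some M"
    using mat_inverse(1)[OF A, of "()"] by (cases "mat_inverse ?A") auto
  from mat_inverse(2)[OF A M] have MA: "M * ?A = 1\<^sub>m n" and Mc: "M \<in> carrier_mat n n" by auto
  have "M = M * (?A * ?N)" using Mc by (simp add: AN)
  also have "\<dots> = ?N" using N by (simp add: assoc_mult_mat[OF Mc A N, symmetric] MA)
  finally show ?thesis using M by simp
qed

lemma matrix_bshift_ebasis:
  assumes a: "cmod a < 1"
  shows "mat n n (\<lambda>(i, j). h2_inner (bshift (ebasis a (j + 1))) (ebasis a (i + 1)))
       = (transpose_mat (shift_mat n) + cnj a \<cdot>\<^sub>m 1\<^sub>m n) * geometric_upper_mat n a"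
  (is "?M = ?P * ?N")
proof (rule eq_matI)
  have P: "?P \<in> carrier_mat n n" by (simp add: shift_mat_def)
  fix i j assume "i < dim_row (?P * ?N)" "j < dim_col (?P * ?N)"
  hence i: "i < n" and j: "j < n" by (simp_all add: shift_mat_def geometric_upper_mat_def)
  have "?M $$ (i, j) = (if i = j then cnj a else 0)
          + (1 - a * cnj a) * (if i < j then (-a) ^ (j - Suc i) else 0)"
    using i j h2_inner_bshift_ebasis[OF a, of "i + 1" "j + 1"] by simp
  also have "\<dots> = (?P * ?N) $$ (i, j)"
    by (subst index_mult_bidiagonal_geometric_upper_mat[OF P index_shift_plus_diag_mat[OF i] i j]) auto
  finally show "?M $$ (i, j) = (?P * ?N) $$ (i, j)" .
qed (simp_all add: shift_mat_def geometric_upper_mat_def)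

section \<open>Rotations and reflections\<close>

lemma sums_taylor_coeff_rotate:
  assumes w: "cmod w = 1" and f: "f holomorphic_on ball 0 1" and z: "z \<in> ball 0 1"
  shows "(\<lambda>n. (taylor_coeff f n * w ^ n) * z ^ n) sums f (w * z)"
proof -
  have "w * z \<in> ball 0 1" using w z by (simp add: norm_mult)
  from sums_taylor_coeff[OF f this] show ?thesis by (simp add: power_mult_distrib mult_ac)
qed

lemma taylor_coeff_rotate:
  "cmod w = 1 \<Longrightarrow> f \<in> hardy2 \<Longrightarrow> taylor_coeff (\<lambda>z. f (w * z)) = (\<lambda>n. taylor_coeff f n * w ^ n)"
  by (intro ext taylor_coeff_eqI sums_taylor_coeff_rotate hardy2_holomorphic)

lemma hardy2_rotate: "cmod w = 1 \<Longrightarrow> f \<in> hardy2 \<Longrightarrow> (\<lambda>z. f (w * z)) \<in> hardy2"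
  using hardy2_square_summable[of f]
    holomorphic_on_ball_if_sums[OF sums_taylor_coeff_rotate[OF _ hardy2_holomorphic]]
  by (auto simp: hardy2_iff taylor_coeff_rotate square_summable_def norm_mult norm_power)

lemma h2_norm_rotate: "cmod w = 1 \<Longrightarrow> f \<in> hardy2 \<Longrightarrow> h2_norm (\<lambda>z. f (w * z)) = h2_norm f"
  by (simp add: h2_norm_def taylor_coeff_rotate norm_mult norm_power)

lemma unimodular_mult_cnj: "cmod w = 1 \<Longrightarrow> w * cnj w = 1"
  using complex_norm_square[of w] by simp

lemma h2_inner_rotate:
  assumes w: "cmod w = 1" and f: "f \<in> hardy2" and g: "g \<in> hardy2"
  shows "h2_inner (\<lambda>z. f (w * z)) (\<lambda>z. g (w * z)) = h2_inner f g"
proof -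
  have "taylor_coeff f n * w ^ n * cnj (taylor_coeff g n * w ^ n)
      = taylor_coeff f n * cnj (taylor_coeff g n) * (w * cnj w) ^ n" for n
    by (simp add: power_mult_distrib mult_ac)
  hence eqn: "taylor_coeff f n * w ^ n * cnj (taylor_coeff g n * w ^ n)
      = taylor_coeff f n * cnj (taylor_coeff g n)" for n
    by (simp add: unimodular_mult_cnj[OF w])
  show ?thesis
    unfolding h2_inner_def taylor_coeff_rotate[OF w f] taylor_coeff_rotate[OF w g] eqn ..
qed

lemma h2_inner_bshift_rotate:
  assumes w: "cmod w = 1" and f: "f \<in> hardy2"
  shows "h2_inner (bshift (\<lambda>z. f (w * z))) (\<lambda>z. f (w * z)) = w * h2_inner (bshift f) f"
proof -
  have fh: "f holomorphic_on ball 0 1" by (rule hardy2_holomorphic[OF f])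
  have "taylor_coeff (bshift (\<lambda>z. f (w * z))) m = taylor_coeff f (Suc m) * w ^ Suc m" for m
    using taylor_coeff_bshift[OF hardy2_holomorphic[OF hardy2_rotate[OF w f]]]
      taylor_coeff_rotate[OF w f] by simp
  hence "h2_inner (bshift (\<lambda>z. f (w * z))) (\<lambda>z. f (w * z))
       = (\<Sum>m. w * (taylor_coeff f (Suc m) * cnj (taylor_coeff f m)) * (w * cnj w) ^ m)"
    unfolding h2_inner_def using taylor_coeff_rotate[OF w f]
    by (simp add: power_mult_distrib mult_ac)
  also have "\<dots> = (\<Sum>m. w * (taylor_coeff (bshift f) m * cnj (taylor_coeff f m)))"
    using unimodular_mult_cnj[OF w] taylor_coeff_bshift[OF fh] by simp
  also have "\<dots> = w * h2_inner (bshift f) f"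
    unfolding h2_inner_def by (intro suminf_mult summable_h2_inner hardy2_bshift f)
  finally show ?thesis .
qed

lemma model_space_rotate:
  assumes w: "cmod w = 1" and rel: "\<And>z. \<psi>1 z = c * \<psi>2 (w * z)"
    and closed: "\<And>g. g \<in> hardy2 \<Longrightarrow> (\<lambda>z. \<psi>2 z * g z) \<in> hardy2"
    and h: "h \<in> model_space \<psi>2"
  shows "(\<lambda>z. h (w * z)) \<in> model_space \<psi>1"
  unfolding model_space_def
proof (intro CollectI conjI ballI)
  have hH: "h \<in> hardy2" using h by (simp add: model_space_def)
  show "(\<lambda>z. h (w * z)) \<in> hardy2" by (rule hardy2_rotate[OF w hH])
  fix G assume G: "G \<in> hardy2"
  define G' where "G' = (\<lambda>z. c * G (cnj w * z))"
  have G': "G' \<in> hardy2" unfolding G'_def by (intro hardy2_cmult hardy2_rotate G) (use w in simp)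
  have "(\<lambda>z. \<psi>1 z * G z) = (\<lambda>z. (\<lambda>u. \<psi>2 u * G' u) (w * z))"
  proof
    fix z
    have "cnj w * (w * z) = z"
      using unimodular_mult_cnj[OF w] by (simp add: mult.assoc[symmetric] mult.commute[of "cnj w"])
    hence "G' (w * z) = c * G z" unfolding G'_def by (simp only:)
    thus "\<psi>1 z * G z = (\<lambda>u. \<psi>2 u * G' u) (w * z)" by (simp add: rel)
  qed
  hence "h2_inner (\<lambda>z. h (w * z)) (\<lambda>z. \<psi>1 z * G z) = h2_inner h (\<lambda>u. \<psi>2 u * G' u)"
    by (simp only: h2_inner_rotate[OF w hH closed[OF G']])
  also have "\<dots> = 0" using h G' by (simp add: model_space_def)
  finally show "h2_inner (\<lambda>z. h (w * z)) (\<lambda>z. \<psi>1 z * G z) = 0" .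
qed

lemma num_range_Sstar_rotate:
  assumes w: "cmod w = 1" and c: "cmod c = 1" and rel: "\<And>z. \<psi>1 z = c * \<psi>2 (w * z)"
    and closed1: "\<And>g. g \<in> hardy2 \<Longrightarrow> (\<lambda>z. \<psi>1 z * g z) \<in> hardy2"
    and closed2: "\<And>g. g \<in> hardy2 \<Longrightarrow> (\<lambda>z. \<psi>2 z * g z) \<in> hardy2"
  shows "num_range_Sstar \<psi>1 = (\<lambda>x. w * x) ` num_range_Sstar \<psi>2"
proof (intro equalityI subsetI)
  have w': "cmod (cnj w) = 1" using w by simp
  have cancel: "cnj w * (w * z) = z" "w * (cnj w * z) = z" for z
    using unimodular_mult_cnj[OF w] by (simp_all add: mult.assoc[symmetric] mult.commute[of "cnj w"])
  have rel': "\<psi>2 z = cnj c * \<psi>1 (cnj w * z)" for z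
  proof -
    have "\<psi>1 (cnj w * z) = c * \<psi>2 z" using rel[of "cnj w * z"] by (simp only: cancel)
    hence "cnj c * \<psi>1 (cnj w * z) = (c * cnj c) * \<psi>2 z" by (simp add: ac_simps)
    thus ?thesis using unimodular_mult_cnj[OF c] by simp
  qed
  fix x assume "x \<in> num_range_Sstar \<psi>1"
  then obtain f where f: "f \<in> model_space \<psi>1" "h2_norm f = 1" and x: "x = h2_inner (bshift f) f"
    unfolding num_range_Sstar_def by blast
  have fH: "f \<in> hardy2" using f by (simp add: model_space_def)
  define h where "h = (\<lambda>z. f (cnj w * z))"
  have hm: "h \<in> model_space \<psi>2" unfolding h_def by (rule model_space_rotate[OF w' rel' closed1 f(1)])
  have hH: "h \<in> hardy2" unfolding h_def by (rule hardy2_rotate[OF w' fH])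
  have fh: "f = (\<lambda>z. h (w * z))" unfolding h_def cancel ..
  have "h2_norm h = 1" using f(2) h2_norm_rotate[OF w hH] fh by simp
  moreover have "x = w * h2_inner (bshift h) h" unfolding x fh by (rule h2_inner_bshift_rotate[OF w hH])
  ultimately show "x \<in> (\<lambda>x. w * x) ` num_range_Sstar \<psi>2"
    using hm unfolding num_range_Sstar_def by blast
next
  fix x assume "x \<in> (\<lambda>x. w * x) ` num_range_Sstar \<psi>2"
  then obtain h where h: "h \<in> model_space \<psi>2" "h2_norm h = 1" and x: "x = w * h2_inner (bshift h) h"
    unfolding num_range_Sstar_def by blast
  have hH: "h \<in> hardy2" using h by (simp add: model_space_def)
  have "(\<lambda>z. h (w * z)) \<in> model_space \<psi>1" by (rule model_space_rotate[OF w rel closed2 h(1)])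
  moreover have "h2_norm (\<lambda>z. h (w * z)) = 1" using h(2) h2_norm_rotate[OF w hH] by simp
  moreover have "x = h2_inner (bshift (\<lambda>z. h (w * z))) (\<lambda>z. h (w * z))"
    unfolding x by (rule h2_inner_bshift_rotate[OF w hH, symmetric])
  ultimately show "x \<in> num_range_Sstar \<psi>1" unfolding num_range_Sstar_def by blast
qed

lemma sums_taylor_coeff_reflect:
  assumes f: "f holomorphic_on ball 0 1" and z: "z \<in> ball 0 1"
  shows "(\<lambda>n. cnj (taylor_coeff f n) * z ^ n) sums cnj (f (cnj z))"
proof -
  have "cnj z \<in> ball 0 1" using z by simp
  from sums_cnj[THEN iffD2, OF sums_taylor_coeff[OF f this]] show ?thesis by simp
qed

lemma taylor_coeff_reflect:
  "f \<in> hardy2 \<Longrightarrow> taylor_coeff (\<lambda>z. cnj (f (cnj z))) = (\<lambda>n. cnj (taylor_coeff f n))"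
  by (intro ext taylor_coeff_eqI sums_taylor_coeff_reflect hardy2_holomorphic)

lemma hardy2_reflect: "f \<in> hardy2 \<Longrightarrow> (\<lambda>z. cnj (f (cnj z))) \<in> hardy2"
  using hardy2_square_summable[of f]
    holomorphic_on_ball_if_sums[OF sums_taylor_coeff_reflect[OF hardy2_holomorphic]]
  by (auto simp: hardy2_iff taylor_coeff_reflect square_summable_def)

lemma h2_norm_reflect: "f \<in> hardy2 \<Longrightarrow> h2_norm (\<lambda>z. cnj (f (cnj z))) = h2_norm f"
  by (simp add: h2_norm_def taylor_coeff_reflect)

lemma h2_inner_reflect:
  assumes "f \<in> hardy2" "g \<in> hardy2"
  shows "h2_inner (\<lambda>z. cnj (f (cnj z))) (\<lambda>z. cnj (g (cnj z))) = cnj (h2_inner f g)"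
  using suminf_cnj[OF summable_h2_inner[OF assms]]
  by (simp add: h2_inner_def taylor_coeff_reflect assms)

lemma h2_inner_bshift_reflect:
  assumes f: "f \<in> hardy2"
  shows "h2_inner (bshift (\<lambda>z. cnj (f (cnj z)))) (\<lambda>z. cnj (f (cnj z)))
       = cnj (h2_inner (bshift f) f)"
proof -
  have "taylor_coeff (bshift (\<lambda>z. cnj (f (cnj z)))) = (\<lambda>m. cnj (taylor_coeff (bshift f) m))"
    using taylor_coeff_bshift[OF hardy2_holomorphic[OF hardy2_reflect[OF f]]]
      taylor_coeff_bshift[OF hardy2_holomorphic[OF f]] by (auto simp: taylor_coeff_reflect f)
  thus ?thesis
    using suminf_cnj[OF summable_h2_inner[OF hardy2_bshift[OF f] f]]
    by (simp add: h2_inner_def taylor_coeff_reflect f)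
qed

lemma model_space_reflect:
  assumes sym: "\<And>z. \<psi> z = cnj (\<psi> (cnj z))"
    and closed: "\<And>g. g \<in> hardy2 \<Longrightarrow> (\<lambda>z. \<psi> z * g z) \<in> hardy2"
    and h: "h \<in> model_space \<psi>"
  shows "(\<lambda>z. cnj (h (cnj z))) \<in> model_space \<psi>"
  unfolding model_space_def
proof (intro CollectI conjI ballI)
  have hH: "h \<in> hardy2" using h by (simp add: model_space_def)
  show "(\<lambda>z. cnj (h (cnj z))) \<in> hardy2" by (rule hardy2_reflect[OF hH])
  fix G assume G: "G \<in> hardy2"
  define G' where "G' = (\<lambda>z. cnj (G (cnj z)))"
  have G': "G' \<in> hardy2" unfolding G'_def by (rule hardy2_reflect[OF G])
  have "(\<lambda>z. \<psi> z * G z) = (\<lambda>z. cnj ((\<lambda>u. \<psi> u * G' u) (cnj z)))"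
    by (rule ext) (simp add: G'_def, subst sym, simp)
  hence "h2_inner (\<lambda>z. cnj (h (cnj z))) (\<lambda>z. \<psi> z * G z) = cnj (h2_inner h (\<lambda>u. \<psi> u * G' u))"
    by (simp only: h2_inner_reflect[OF hH closed[OF G']])
  also have "\<dots> = 0" using h G' by (simp add: model_space_def)
  finally show "h2_inner (\<lambda>z. cnj (h (cnj z))) (\<lambda>z. \<psi> z * G z) = 0" .
qed

lemma cnj_mem_num_range_Sstar:
  assumes sym: "\<And>z. \<psi> z = cnj (\<psi> (cnj z))"
    and closed: "\<And>g. g \<in> hardy2 \<Longrightarrow> (\<lambda>z. \<psi> z * g z) \<in> hardy2"
    and x: "x \<in> num_range_Sstar \<psi>"
  shows "cnj x \<in> num_range_Sstar \<psi>"
proof -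
  obtain f where f: "f \<in> model_space \<psi>" "h2_norm f = 1" and x: "x = h2_inner (bshift f) f"
    using x unfolding num_range_Sstar_def by blast
  have fH: "f \<in> hardy2" using f by (simp add: model_space_def)
  show ?thesis
    using model_space_reflect[OF sym closed f(1)] f(2) h2_norm_reflect[OF fH]
      h2_inner_bshift_reflect[OF fH] unfolding x num_range_Sstar_def by force
qed

lemma blaschke_pow_rotate:
  "blaschke_pow \<alpha> n z
     = cis (Arg \<alpha>) ^ n * blaschke_pow (complex_of_real (cmod \<alpha>)) n (cnj (cis (Arg \<alpha>)) * z)"
proof -
  let ?c = "cis (Arg \<alpha>)" and ?r = "complex_of_real (cmod \<alpha>)"
  have \<alpha>: "\<alpha> = ?r * ?c" using rcis_cmod_Arg[of \<alpha>] by (simp add: rcis_def)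
  have cc: "?c * cnj ?c = 1" by (simp add: cis_cnj cis_mult)
  have "z - \<alpha> = ?c * (cnj ?c * z - ?r)" by (subst \<alpha>) (use cc in \<open>simp add: algebra_simps\<close>)
  moreover have "1 - cnj \<alpha> * z = 1 - cnj ?r * (cnj ?c * z)" by (subst \<alpha>) (simp add: mult_ac)
  ultimately have "(z - \<alpha>) / (1 - cnj \<alpha> * z) = ?c * ((cnj ?c * z - ?r) / (1 - cnj ?r * (cnj ?c * z)))"
    by simp
  thus ?thesis by (simp only: blaschke_pow_def power_mult_distrib)
qed

lemma num_range_Sstar_blaschke_pow_rotate:
  assumes a: "cmod \<alpha> < 1"
  shows "num_range_Sstar (blaschke_pow \<alpha> n)
       = (\<lambda>w. cis (- Arg \<alpha>) * w) ` num_range_Sstar (blaschke_pow (complex_of_real (cmod \<alpha>)) n)"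
  using num_range_Sstar_rotate[of "cnj (cis (Arg \<alpha>))" "cis (Arg \<alpha>) ^ n", OF _ _ blaschke_pow_rotate
      hardy2_blaschke_pow_mult[OF a] hardy2_blaschke_pow_mult] a
  by (simp add: norm_power cis_cnj)

lemma num_radius_Sstar_blaschke_pow:
  assumes "cmod \<alpha> < 1" "cmod \<beta> = cmod \<alpha>"
  shows "num_radius_Sstar (blaschke_pow \<beta> n) = num_radius_Sstar (blaschke_pow \<alpha> n)"
  using num_range_Sstar_blaschke_pow_rotate[of \<alpha> n] num_range_Sstar_blaschke_pow_rotate[of \<beta> n] assms
  by (simp add: num_radius_Sstar_def image_image norm_mult)

lemma cnj_mem_num_range_Sstar_blaschke_pow_real:
  assumes "\<bar>r\<bar> < 1"
  shows "cnj w \<in> num_range_Sstar (blaschke_pow (complex_of_real r) n)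
     \<longleftrightarrow> w \<in> num_range_Sstar (blaschke_pow (complex_of_real r) n)"
  using cnj_mem_num_range_Sstar[of "blaschke_pow (complex_of_real r) n", OF _ hardy2_blaschke_pow_mult]
    assms by (force simp: blaschke_pow_def)

theorem mainTheorem6:
  fixes n :: nat and \<alpha> :: complex
  assumes "n \<ge> 1" and "cmod \<alpha> < 1"
  shows
    "(\<forall>k\<in>{1..n}. ebasis \<alpha> k \<in> model_space (blaschke_pow \<alpha> n))
     \<and> (\<forall>j\<in>{1..n}. \<forall>k\<in>{1..n}. h2_inner (ebasis \<alpha> j) (ebasis \<alpha> k) = (if j = k then 1 else 0))
     \<and> (\<forall>f\<in>model_space (blaschke_pow \<alpha> n). \<forall>z\<in>ball 0 1.
           f z = (\<Sum>k=1..n. h2_inner f (ebasis \<alpha> k) * ebasis \<alpha> k z))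
     \<and> (\<exists>M. mat_inverse (1\<^sub>m n + \<alpha> \<cdot>\<^sub>m transpose_mat (shift_mat n)) = Some M
           \<and> mat n n (\<lambda>(i, j). h2_inner (bshift (ebasis \<alpha> (j + 1))) (ebasis \<alpha> (i + 1)))
             = (transpose_mat (shift_mat n) + cnj \<alpha> \<cdot>\<^sub>m 1\<^sub>m n) * M)
     \<and> num_range_Sstar (blaschke_pow \<alpha> n)
           = (\<lambda>w. cis (- Arg \<alpha>) * w) ` num_range_Sstar (blaschke_pow (complex_of_real (cmod \<alpha>)) n)
     \<and> (\<forall>\<beta>. cmod \<beta> = cmod \<alpha> \<longrightarrow>
           num_radius_Sstar (blaschke_pow \<beta> n) = num_radius_Sstar (blaschke_pow \<alpha> n))
     \<and> (\<forall>a::real. 0 \<le> a \<and> a < 1 \<longrightarrow>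
           (\<forall>w. w \<in> num_range_Sstar (blaschke_pow (complex_of_real a) n)
                \<longleftrightarrow> cnj w \<in> num_range_Sstar (blaschke_pow (complex_of_real a) n)))"
proof (intro conjI ballI allI impI)
  note a = assms(2)
  show "ebasis \<alpha> k \<in> model_space (blaschke_pow \<alpha> n)" if "k \<in> {1..n}" for k
    using ebasis_in_model_space[OF a that] .
  show "h2_inner (ebasis \<alpha> j) (ebasis \<alpha> k) = (if j = k then 1 else 0)"
    if "j \<in> {1..n}" "k \<in> {1..n}" for j k
    using ebasis_orthonormal[OF a] that by simp
  show "f z = (\<Sum>k=1..n. h2_inner f (ebasis \<alpha> k) * ebasis \<alpha> k z)"
    if "f \<in> model_space (blaschke_pow \<alpha> n)" "z \<in> ball 0 1" for f z
    using model_space_expansion[OF a that] .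
  show "\<exists>M. mat_inverse (1\<^sub>m n + \<alpha> \<cdot>\<^sub>m transpose_mat (shift_mat n)) = Some M
           \<and> mat n n (\<lambda>(i, j). h2_inner (bshift (ebasis \<alpha> (j + 1))) (ebasis \<alpha> (i + 1)))
             = (transpose_mat (shift_mat n) + cnj \<alpha> \<cdot>\<^sub>m 1\<^sub>m n) * M"
    using mat_inverse_one_plus_shift_mat matrix_bshift_ebasis[OF a] by blast
  show "num_range_Sstar (blaschke_pow \<alpha> n)
      = (\<lambda>w. cis (- Arg \<alpha>) * w) ` num_range_Sstar (blaschke_pow (complex_of_real (cmod \<alpha>)) n)"
    by (rule num_range_Sstar_blaschke_pow_rotate[OF a])
  show "num_radius_Sstar (blaschke_pow \<beta> n) = num_radius_Sstar (blaschke_pow \<alpha> n)"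
    if "cmod \<beta> = cmod \<alpha>" for \<beta>
    by (rule num_radius_Sstar_blaschke_pow[OF a that])
  show "w \<in> num_range_Sstar (blaschke_pow (complex_of_real r) n)
      \<longleftrightarrow> cnj w \<in> num_range_Sstar (blaschke_pow (complex_of_real r) n)"
    if "0 \<le> r \<and> r < 1" for r w
    using cnj_mem_num_range_Sstar_blaschke_pow_real[of r] that by simp
qed

end
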